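(* Let $(V,\mathcal H,\iota,W)$ be a generalized functional theory. For every $v\in V$, $$E(v)=\min_{\rho\in\bigcup_{u\in V}\iota^*(\mathbf G_p(u))}\big[\langle\rho,v\rangle+\mathcal F_{HK}(\rho)\big]=\min_{\rho\in\iota^*(\mathcal P)}\big[\langle\rho,v\rangle+\mathcal F_p(\rho)\big]=\min_{\rho\in\iota^*(\mathcal E)}\big[\langle\rho,v\rangle+\mathcal F_e(\rho)\big].$$
   Context: A generalized functional theory is a tuple $(V,\mathcal H,\iota,W)$ with $V$ a finite-dimensional real vector space, $\mathcal H$ a finite-dimensional complex Hilbert space, $\iota:V\to i\mathfrak u(\mathcal H)$ linear into the Hermitian operators, $W$ Hermitian. Density operators are regarded as elements of $(i\mathfrak u(\mathcal H))^*$ via $\Gamma\mapsto\mathrm{Tr}(\Gamma\,\cdot)$; $\iota^*$ is the dual map and $\langle\cdot,\cdot\rangle$ the natural pairings. $\mathcal P$ = pure states, $\mathcal E$ = density operators. $E(v)=\min_{\|\Psi\|=1}\langle\Psi|\iota(v)+W|\Psi\rangle$ is the ground state energy, $\mathbf G_p(v)$ the set of pure ground states of $\iota(v)+W$. The Hohenberg–Kohn functional $\mathcal F_{HK}$ is defined on the pure-state $v$-representable densities $\bigcup_{u}\iota^*(\mathbf G_p(u))$ by $\mathcal F_{HK}(\rho)=\mathrm{Tr}(\Gamma W)$ for any $u$ and any $\Gamma\in\mathbf G_p(u)$ with $\iota^*(\Gamma)=\rho$ (this is independent of the choices). The pure and ensemble functionals are $\mathcal F_p(\rho)=\min\{\mathrm{Tr}(\Gamma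 W):\Gamma\in\mathcal P,\iota^*(\Gamma)=\rho\}$ on $\iota^*(\mathcal P)$ and $\mathcal F_e(\rho)=\min\{\mathrm{Tr}(\Gamma W):\Gamma\in\mathcal E,\iota^*(\Gamma)=\rho\}$ on $\iota^*(\mathcal E)$. *)

theory Defs
  imports "HOL-Analysis.Analysis"
begin

text \<open>Hilbert space H = complex^'n (finite, nonzero dimension); operators = complex^'n^'n.\<close>

definition adj :: "complex^'n^'n \<Rightarrow> complex^'n^'n" where
  "adj A = (\<chi> i j. cnj (A $ j $ i))"

definition hermitian :: "complex^'n^'n \<Rightarrow> bool" where
  "hermitian A \<longleftrightarrow> adj A = A"

definition qform :: "complex^'n^'n \<Rightarrow> complex^'n \<Rightarrow> complex" where
  "qform A x = (\<Sum>i\<in>UNIV. \<Sum>j\<in>UNIV. cnj (x $ i) * A $ i $ j * x $ j)"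

definition proj :: "complex^'n \<Rightarrow> complex^'n^'n" where
  "proj x = (\<chi> i j. x $ i * cnj (x $ j))"

definition pure_states :: "(complex^'n^'n) set" where
  "pure_states = {proj \<Psi> | \<Psi>. norm \<Psi> = 1}"

definition density_ops :: "(complex^'n^'n) set" where
  "density_ops = {\<Gamma>. hermitian \<Gamma> \<and> (\<forall>x. 0 \<le> Re (qform \<Gamma> x)) \<and> trace \<Gamma> = 1}"

definition gft :: "('v::real_vector \<Rightarrow> complex^'n^'n) \<Rightarrow> complex^'n^'n \<Rightarrow> bool" where
  "gft \<iota> W \<longleftrightarrow> (\<exists>B::'v set. finite B \<and> span B = UNIV) \<and> linear \<iota> \<and>
     (\<forall>v. hermitian (\<iota> v)) \<and> hermitian W"

definition dualmap :: "('v \<Rightarrow> complex^'n^'n) \<Rightarrow> complex^'n^'n \<Rightarrow> ('v \<Rightarrow> real)" where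
  "dualmap \<iota> \<Gamma> = (\<lambda>v. Re (trace (\<Gamma> ** \<iota> v)))"

definition gs_energy :: "('v \<Rightarrow> complex^'n^'n) \<Rightarrow> complex^'n^'n \<Rightarrow> 'v \<Rightarrow> real" where
  "gs_energy \<iota> W v = Inf {Re (qform (\<iota> v + W) \<Psi>) | \<Psi>. norm \<Psi> = 1}"

definition pure_ground_states :: "('v \<Rightarrow> complex^'n^'n) \<Rightarrow> complex^'n^'n \<Rightarrow> 'v \<Rightarrow> (complex^'n^'n) set" where
  "pure_ground_states \<iota> W u =
     {proj \<Psi> | \<Psi>. norm \<Psi> = 1 \<and> Re (qform (\<iota> u + W) \<Psi>) = gs_energy \<iota> W u}"

definition vrep :: "('v \<Rightarrow> complex^'n^'n) \<Rightarrow> complex^'n^'n \<Rightarrow> ('v \<Rightarrow> real) set" where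
  "vrep \<iota> W = (\<Union>u. dualmap \<iota> ` pure_ground_states \<iota> W u)"

definition F_HK :: "('v \<Rightarrow> complex^'n^'n) \<Rightarrow> complex^'n^'n \<Rightarrow> ('v \<Rightarrow> real) \<Rightarrow> real" where
  "F_HK \<iota> W \<rho> = Re (trace ((SOME \<Gamma>. \<exists>u. \<Gamma> \<in> pure_ground_states \<iota> W u \<and> dualmap \<iota> \<Gamma> = \<rho>) ** W))"

definition F_p :: "('v \<Rightarrow> complex^'n^'n) \<Rightarrow> complex^'n^'n \<Rightarrow> ('v \<Rightarrow> real) \<Rightarrow> real" where
  "F_p \<iota> W \<rho> = Inf {Re (trace (\<Gamma> ** W)) | \<Gamma>. \<Gamma> \<in> pure_states \<and> dualmap \<iota> \<Gamma> = \<rho>}"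

definition F_e :: "('v \<Rightarrow> complex^'n^'n) \<Rightarrow> complex^'n^'n \<Rightarrow> ('v \<Rightarrow> real) \<Rightarrow> real" where
  "F_e \<iota> W \<rho> = Inf {Re (trace (\<Gamma> ** W)) | \<Gamma>. \<Gamma> \<in> density_ops \<and> dualmap \<iota> \<Gamma> = \<rho>}"

definition is_min_over :: "('a \<Rightarrow> real) \<Rightarrow> 'a set \<Rightarrow> real \<Rightarrow> bool" where
  "is_min_over f S m \<longleftrightarrow> (\<exists>x\<in>S. f x = m) \<and> (\<forall>x\<in>S. m \<le> f x)"

end

theory Submission
  imports Defs
begin

(* The energy of a density operator Gamma in the potential v is
   Re Tr(Gamma (iota v + W)) = <iota^* Gamma, v> + Re Tr(Gamma W), and it is at least E(v):
   a Hermitian positive semidefinite Gamma is a sum of rank-one projectors (peeled off one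
   coordinate at a time by Schur complements), so Re Tr(Gamma M) >= 0 whenever
   Re <x|M|x> >= 0 for all x; apply this to M = iota v + W - E(v). A pure ground state
   attains E(v), so minimising first over the states of a given density and then over the
   densities gives E(v) for F_p and F_e alike. A pure ground state of some u minimises
   Tr(Gamma W) among the pure states of its density, hence F_HK = F_p on v-representable
   densities, and the minimiser found above is v-representable.
   Only real parts of expectation values occur. *)

(* Numerical range in the closed right half-plane; for Hermitian matrices this is
   positive semidefiniteness, the condition used in density_ops. *)
definition accretive :: "complex^'n^'n \<Rightarrow> bool" where
  "accretive A \<longleftrightarrow> (\<forall>x. 0 \<le> Re (qform A x))"

definition supported_on :: "'n set \<Rightarrow> complex^'n^'n \<Rightarrow> bool" where
  "supported_on S A \<longleftrightarrow> (\<forall>i j. i \<notin> S \<or> j \<notin> S \<longrightarrow> A$i$j = 0)"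

definition schur_compl :: "complex^'n^'n \<Rightarrow> 'n \<Rightarrow> complex^'n^'n" where
  "schur_compl G a = (\<chi> i j. G$i$j - G$i$a * G$a$j / G$a$a)"

lemma trace_matrix_mult:
  fixes A B :: "complex^'n^'n"
  shows "trace (A ** B) = (\<Sum>i\<in>UNIV. \<Sum>k\<in>UNIV. A$i$k * B$k$i)"
  by (simp add: trace_def matrix_matrix_mult_def)

lemma trace_proj_mult:
  fixes A :: "complex^'n^'n"
  shows "trace (proj x ** A) = qform A x"
proof -
  have "trace (proj x ** A) = (\<Sum>i\<in>UNIV. \<Sum>k\<in>UNIV. x$i * cnj (x$k) * A$k$i)"
    by (simp add: trace_matrix_mult proj_def)
  also have "\<dots> = (\<Sum>k\<in>UNIV. \<Sum>i\<in>UNIV. cnj (x$k) * A$k$i * x$i)"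
    by (subst sum.swap) (simp add: mult.commute mult.left_commute)
  finally show ?thesis
    unfolding qform_def .
qed

lemma trace_mult_add_right:
  fixes G A B :: "complex^'n^'n"
  shows "trace (G ** (A + B)) = trace (G ** A) + trace (G ** B)"
  by (simp add: matrix_add_ldistrib trace_add)

lemma trace_mult_diff_right:
  fixes G A B :: "complex^'n^'n"
  shows "trace (G ** (A - B)) = trace (G ** A) - trace (G ** B)"
  unfolding trace_matrix_mult by (simp add: right_diff_distrib sum_subtractf)

lemma trace_add_mult_left:
  fixes A B M :: "complex^'n^'n"
  shows "trace ((A + B) ** M) = trace (A ** M) + trace (B ** M)"
  unfolding trace_matrix_mult by (simp add: distrib_right sum.distrib)

lemma trace_mult_mat:
  fixes G :: "complex^'n^'n"
  shows "trace (G ** mat c) = c * trace G"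
proof -
  have "(\<Sum>k\<in>UNIV. G$i$k * mat c$k$i) = c * G$i$i" for i
    by (simp add: mat_def if_distrib if_distribR cong: if_cong)
  then show ?thesis
    unfolding trace_matrix_mult by (simp add: trace_def sum_distrib_left mult.commute)
qed

lemma sum_cnj_mult_self: "(\<Sum>i\<in>UNIV. cnj (x$i) * x$i) = of_real ((norm (x::complex^'n))\<^sup>2)"
proof -
  have "(\<Sum>i\<in>UNIV. cnj (x$i) * x$i) = (\<Sum>i\<in>UNIV. of_real ((norm (x$i))\<^sup>2))"
    by (rule sum.cong[OF refl], subst complex_norm_square, rule mult.commute)
  also have "\<dots> = of_real ((norm x)\<^sup>2)"
    by (simp add: norm_vec_def L2_set_def sum_nonneg)
  finally show ?thesis .
qed

lemma qform_diff: "qform (A - B) x = qform A x - qform B x"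
  unfolding qform_def by (simp add: algebra_simps sum_subtractf)

lemma qform_mat: "qform (mat c) x = c * of_real ((norm x)\<^sup>2)"
proof -
  have "(\<Sum>j\<in>UNIV. cnj (x$i) * mat c$i$j * x$j) = c * (cnj (x$i) * x$i)" for i
    by (simp add: mat_def if_distrib if_distribR cong: if_cong)
  then show ?thesis
    unfolding qform_def sum_cnj_mult_self[symmetric] by (simp add: sum_distrib_left)
qed

lemma qform_scaleR: "qform A (r *\<^sub>R x) = of_real (r\<^sup>2) * qform A x"
proof -
  have "(r *\<^sub>R x)$i = of_real r * x$i" for i
    by (subst vector_scaleR_component) (rule scaleR_conv_of_real)
  then show ?thesis
    unfolding qform_def by (simp add: sum_distrib_left algebra_simps power2_eq_square)
qed

lemma qform_add_axis:
  fixes x :: "complex^'n"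
  shows "qform A (x + axis a s) = qform A x + cnj s * (\<Sum>k\<in>UNIV. A$a$k * x$k)
     + (\<Sum>i\<in>UNIV. cnj (x$i) * A$i$a) * s + cnj s * A$a$a * s"
proof -
  have "cnj (x$i + (if i = a then s else 0)) * A$i$j * (x$j + (if j = a then s else 0)) =
    cnj (x$i) * A$i$j * x$j + (if j = a then cnj (x$i) * A$i$a * s else 0)
    + (if i = a then cnj s * (A$a$j * x$j) else 0)
    + (if i = a then (if j = a then cnj s * A$a$a * s else 0) else 0)"
    for i j by (auto simp: algebra_simps)
  moreover have "(\<Sum>i\<in>UNIV. \<Sum>j\<in>UNIV. if i = a then f i j else 0) = (\<Sum>j\<in>UNIV. f a j)"
    for f :: "'n \<Rightarrow> 'n \<Rightarrow> complex"
    by (subst sum.swap) simp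
  ultimately show ?thesis
    unfolding qform_def vector_add_component axis_def vec_lambda_beta
    by (simp add: sum.distrib sum_distrib_left[symmetric] sum_distrib_right[symmetric] algebra_simps)
qed

lemma qform_axis: "qform G (axis j 1) = G$j$j"
  using qform_add_axis[of G 0 j 1] by (simp add: qform_def)

lemma continuous_on_Re_qform: "continuous_on S (\<lambda>x. Re (qform A x))"
  unfolding qform_def by (intro continuous_intros)

lemma qform_proj: "qform (proj y) x = of_real ((norm (\<Sum>i\<in>UNIV. cnj (x$i) * y$i))\<^sup>2)"
proof -
  have "qform (proj y) x = (\<Sum>i\<in>UNIV. cnj (x$i) * y$i) * cnj (\<Sum>i\<in>UNIV. cnj (x$i) * y$i)"
    unfolding qform_def proj_def
    by (simp add: sum_distrib_left sum_distrib_right algebra_simps)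
  also have "\<dots> = of_real ((norm (\<Sum>i\<in>UNIV. cnj (x$i) * y$i))\<^sup>2)"
    by (rule complex_norm_square[symmetric])
  finally show ?thesis .
qed

lemma hermitian_cnj_entry: "hermitian G \<Longrightarrow> cnj (G$i$j) = G$j$i"
  unfolding hermitian_def adj_def by (metis vec_lambda_beta)

lemma hermitian_diag_real: "hermitian G \<Longrightarrow> G$a$a = of_real (Re (G$a$a))"
  using hermitian_cnj_entry[of G a a] by (simp add: complex_eq_iff)

lemma accretive_diag_nonneg: "accretive G \<Longrightarrow> 0 \<le> Re (G$a$a)"
  unfolding accretive_def by (metis qform_axis)

lemma hermitian_accretive_zero_diag_row:
  assumes herm: "hermitian G" and acc: "accretive G" and diag: "G$a$a = 0"
  shows "G$a$j = 0"
proof (rule ccontr)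
  define w where "w = G$a$j"
  assume "G$a$j \<noteq> 0"
  then have w_pos: "0 < (norm w)\<^sup>2" unfolding w_def by simp
  define t where "t = (Re (G$j$j) + 1) / (2 * (norm w)\<^sup>2)"
  have row: "(\<Sum>k\<in>UNIV. G$a$k * axis j 1 $ k) = w"
    unfolding w_def by (simp add: axis_def if_distrib[of "times _"] cong: if_cong)
  have "(\<Sum>i\<in>UNIV. cnj (axis j 1 $ i) * G$i$a) = G$j$a"
    by (simp add: axis_def if_distrib[of cnj] if_distrib[of "\<lambda>y. y * _"] cong: if_cong)
  also have "\<dots> = cnj w"
    unfolding w_def hermitian_cnj_entry[OF herm] ..
  finally have col: "(\<Sum>i\<in>UNIV. cnj (axis j 1 $ i) * G$i$a) = cnj w" .
  have norm_w: "cnj w * w = of_real ((norm w)\<^sup>2)"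
    unfolding complex_norm_square by (rule mult.commute)
  have "qform G (axis j 1 + axis a (- of_real t * w)) = G$j$j - 2 * of_real t * (cnj w * w)"
    unfolding qform_add_axis row col qform_axis diag by (simp add: algebra_simps)
  then have "Re (qform G (axis j 1 + axis a (- of_real t * w))) = Re (G$j$j) - 2 * t * (norm w)\<^sup>2"
    by (simp add: norm_w)
  also have "\<dots> = -1"
    unfolding t_def using w_pos by (simp add: field_simps)
  finally show False
    using acc unfolding accretive_def by (metis neg_0_le_iff_le not_one_le_zero)
qed

lemma qform_schur_compl:
  "qform (schur_compl G a) x
     = qform G x - (\<Sum>i\<in>UNIV. cnj (x$i) * G$i$a) * (\<Sum>k\<in>UNIV. G$a$k * x$k) / G$a$a"
proof -
  have "qform (schur_compl G a) x
      = (\<Sum>i\<in>UNIV. \<Sum>j\<in>UNIV. cnj (x$i) * G$i$j * x$j - (cnj (x$i) * G$i$a) * (G$a$j * x$j) / G$a$a)"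
    unfolding qform_def schur_compl_def by (simp add: algebra_simps)
  also have "\<dots> = qform G x - (\<Sum>i\<in>UNIV. \<Sum>j\<in>UNIV. (cnj (x$i) * G$i$a) * (G$a$j * x$j) / G$a$a)"
    unfolding qform_def by (simp add: sum_subtractf)
  also have "(\<Sum>i\<in>UNIV. \<Sum>j\<in>UNIV. (cnj (x$i) * G$i$a) * (G$a$j * x$j) / G$a$a)
      = (\<Sum>i\<in>UNIV. cnj (x$i) * G$i$a) * (\<Sum>k\<in>UNIV. G$a$k * x$k) / G$a$a"
    by (simp add: sum_distrib_left sum_distrib_right sum_divide_distrib) (rule sum.swap)
  finally show ?thesis .
qed

lemma hermitian_schur_compl:
  assumes "hermitian G"
  shows "hermitian (schur_compl G a)"
proof -
  have "cnj (G$i$j) = G$j$i" for i j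
    using assms by (rule hermitian_cnj_entry)
  then show ?thesis
    by (simp add: hermitian_def adj_def schur_compl_def vec_eq_iff)
qed

lemma accretive_schur_compl:
  fixes G :: "complex^'n^'n"
  assumes herm: "hermitian G" and acc: "accretive G"
  shows "accretive (schur_compl G a)"
proof (cases "G$a$a = 0")
  case True
  \<comment> \<open>division by zero makes the Schur complement trivial\<close>
  then have "schur_compl G a = G"
    by (simp add: schur_compl_def vec_eq_iff)
  with acc show ?thesis by simp
next
  case False
  show ?thesis
    unfolding accretive_def
  proof
    fix x :: "complex^'n"
    define p where "p = (\<Sum>k\<in>UNIV. G$a$k * x$k)"
    have col: "(\<Sum>i\<in>UNIV. cnj (x$i) * G$i$a) = cnj p"
      unfolding p_def by (simp add: hermitian_cnj_entry[OF herm] mult.commute)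
    have "G$a$a = of_real (Re (G$a$a))"
      using herm by (rule hermitian_diag_real)
    \<comment> \<open>completing the square in the coordinate \<open>a\<close>\<close>
    then have "qform G (x + axis a (- p / G$a$a)) = qform (schur_compl G a) x"
      unfolding qform_schur_compl qform_add_axis col p_def[symmetric]
      using False by (simp add: field_simps)
    then show "0 \<le> Re (qform (schur_compl G a) x)"
      using acc unfolding accretive_def by metis
  qed
qed

lemma supported_on_schur_compl:
  assumes "supported_on (insert a S) G" and "G$a$a \<noteq> 0"
  shows "supported_on S (schur_compl G a)"
  unfolding supported_on_def
proof (intro allI impI)
  fix i j
  assume "i \<notin> S \<or> j \<notin> S"
  then consider "i = a" | "j = a" | "i \<notin> insert a S" | "j \<notin> insert a S"
    by blast
  then show "schur_compl G a $ i $ j = 0"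
    using assms unfolding supported_on_def schur_compl_def by cases auto
qed

lemma proj_add_schur_compl:
  assumes herm: "hermitian G" and acc: "accretive G" and diag: "G$a$a \<noteq> 0"
  shows "G = proj (\<chi> i. G$i$a / of_real (sqrt (Re (G$a$a)))) + schur_compl G a"
proof -
  define d where "d = Re (G$a$a)"
  have G_aa: "G$a$a = of_real d"
    unfolding d_def using herm by (rule hermitian_diag_real)
  have "0 < d"
    using accretive_diag_nonneg[OF acc, of a] diag G_aa unfolding d_def
    by (metis less_eq_real_def of_real_0)
  then have sqrt_sq: "of_real (sqrt d) * of_real (sqrt d) = G$a$a"
    unfolding G_aa of_real_mult[symmetric] by simp
  have "G$i$a / of_real (sqrt d) * cnj (G$j$a / of_real (sqrt d)) = G$i$a * G$a$j / G$a$a" for i j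
    unfolding complex_cnj_divide complex_cnj_complex_of_real hermitian_cnj_entry[OF herm] sqrt_sq[symmetric]
    by simp
  then show ?thesis
    unfolding proj_def schur_compl_def d_def[symmetric] by (simp add: vec_eq_iff)
qed

lemma trace_mult_accretive_nonneg_supported:
  assumes "finite S" and "supported_on S G" and "hermitian G" and "accretive G" and "accretive M"
  shows "0 \<le> Re (trace (G ** M))"
  using assms(1-4)
proof (induction S arbitrary: G rule: finite_induct)
  case empty
  then have "G = 0"
    by (simp add: supported_on_def vec_eq_iff)
  then show ?case
    by (simp add: trace_def)
next
  case (insert a S)
  show ?case
  proof (cases "G$a$a = 0")
    case True
    then have "G$a$j = 0" "G$j$a = 0" for j
      using hermitian_accretive_zero_diag_row[OF insert.prems(2,3)]
        hermitian_cnj_entry[OF insert.prems(2), of a j] by auto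
    then have "supported_on S G"
      using insert.prems(1) unfolding supported_on_def by (metis insertE)
    then show ?thesis
      using insert.IH insert.prems(2,3) by blast
  next
    case False
    let ?c = "\<chi> i. G$i$a / of_real (sqrt (Re (G$a$a)))"
    have "trace (G ** M) = qform M ?c + trace (schur_compl G a ** M)"
      by (subst proj_add_schur_compl[OF insert.prems(2,3) False])
        (simp add: trace_add_mult_left trace_proj_mult)
    moreover have "0 \<le> Re (qform M ?c)"
      using assms(5) unfolding accretive_def by blast
    moreover have "0 \<le> Re (trace (schur_compl G a ** M))"
      using insert.IH supported_on_schur_compl[OF insert.prems(1) False]
        hermitian_schur_compl[OF insert.prems(2)] accretive_schur_compl[OF insert.prems(2,3)]
      by blast
    ultimately show ?thesis by simp
  qed
qed

lemma trace_mult_accretive_nonneg: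
  "hermitian G \<Longrightarrow> accretive G \<Longrightarrow> accretive M \<Longrightarrow> 0 \<le> Re (trace (G ** M))"
  using trace_mult_accretive_nonneg_supported[of UNIV] by (simp add: supported_on_def)

lemma mem_density_ops: "\<Gamma> \<in> density_ops \<longleftrightarrow> hermitian \<Gamma> \<and> accretive \<Gamma> \<and> trace \<Gamma> = 1"
  unfolding density_ops_def accretive_def by simp

lemma accretive_diff_mat_lower_bound:
  fixes A :: "complex^'n^'n"
  assumes "\<forall>\<Psi>. norm \<Psi> = 1 \<longrightarrow> E \<le> Re (qform A \<Psi>)"
  shows "accretive (A - mat (of_real E))"
  unfolding accretive_def
proof
  fix x :: "complex^'n"
  show "0 \<le> Re (qform (A - mat (of_real E)) x)"
  proof (cases "x = 0")
    case True
    then show ?thesis by (simp add: qform_def)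
  next
    case False
    define \<Psi> where "\<Psi> = (1 / norm x) *\<^sub>R x"
    have "norm \<Psi> = 1" and x_eq: "x = norm x *\<^sub>R \<Psi>"
      unfolding \<Psi>_def using False by simp_all
    then have "E \<le> Re (qform A \<Psi>)"
      using assms by blast
    moreover have "qform (A - mat (of_real E)) x = of_real ((norm x)\<^sup>2) * (qform A \<Psi> - of_real E)"
      unfolding qform_diff qform_mat by (subst (1) x_eq, subst qform_scaleR) (simp add: algebra_simps)
    ultimately show ?thesis by simp
  qed
qed

lemma density_ops_trace_lower_bound:
  assumes "\<Gamma> \<in> density_ops" and "\<forall>\<Psi>. norm \<Psi> = 1 \<longrightarrow> E \<le> Re (qform A \<Psi>)"
  shows "E \<le> Re (trace (\<Gamma> ** A))"
proof -
  have "0 \<le> Re (trace (\<Gamma> ** (A - mat (of_real E))))"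
    using assms trace_mult_accretive_nonneg accretive_diff_mat_lower_bound
    unfolding mem_density_ops by blast
  also have "trace (\<Gamma> ** (A - mat (of_real E))) = trace (\<Gamma> ** A) - of_real E"
    using assms(1) unfolding trace_mult_diff_right trace_mult_mat mem_density_ops by simp
  finally show ?thesis by simp
qed

lemma proj_in_density_ops:
  assumes "norm \<Psi> = 1"
  shows "proj \<Psi> \<in> density_ops"
proof -
  have "hermitian (proj \<Psi>)"
    unfolding hermitian_def adj_def proj_def by (simp add: vec_eq_iff mult.commute)
  moreover have "accretive (proj \<Psi>)"
    unfolding accretive_def qform_proj by simp
  moreover have "trace (proj \<Psi>) = (\<Sum>i\<in>UNIV. cnj (\<Psi>$i) * \<Psi>$i)"
    unfolding trace_def proj_def by (simp add: mult.commute)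
  then have "trace (proj \<Psi>) = 1"
    unfolding sum_cnj_mult_self assms by simp
  ultimately show ?thesis
    unfolding mem_density_ops by blast
qed

lemma pure_states_subset_density_ops: "pure_states \<subseteq> density_ops"
  unfolding pure_states_def using proj_in_density_ops by blast

lemma is_min_over_Re_qform_sphere:
  fixes A :: "complex^'n^'n"
  shows "is_min_over (\<lambda>\<Psi>. Re (qform A \<Psi>)) (sphere 0 1) (Inf {Re (qform A \<Psi>) | \<Psi>. norm \<Psi> = 1})"
proof -
  have "axis undefined 1 \<in> sphere (0::complex^'n) 1"
    by (simp add: norm_axis_1)
  then obtain \<Psi> where \<Psi>: "\<Psi> \<in> sphere (0::complex^'n) 1"
    and min: "\<forall>\<Phi>\<in>sphere 0 1. Re (qform A \<Psi>) \<le> Re (qform A \<Phi>)"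
    using continuous_attains_inf[OF compact_sphere _ continuous_on_Re_qform] by blast
  then have "Inf {Re (qform A \<Phi>) | \<Phi>. norm \<Phi> = 1} = Re (qform A \<Psi>)"
    by (intro cInf_eq_minimum) auto
  with \<Psi> min show ?thesis
    unfolding is_min_over_def by auto
qed

lemma is_min_over_gs_energy:
  "is_min_over (\<lambda>\<Psi>. Re (qform (\<iota> u + W) \<Psi>)) (sphere 0 1) (gs_energy \<iota> W u)"
  unfolding gs_energy_def by (rule is_min_over_Re_qform_sphere)

lemma dualmap_add_Re_trace:
  "dualmap \<iota> \<Gamma> u + Re (trace (\<Gamma> ** W)) = Re (trace (\<Gamma> ** (\<iota> u + W)))"
  unfolding dualmap_def by (simp add: trace_mult_add_right)

lemma gs_energy_le_density_ops:
  assumes "\<Gamma> \<in> density_ops"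
  shows "gs_energy \<iota> W u \<le> dualmap \<iota> \<Gamma> u + Re (trace (\<Gamma> ** W))"
proof -
  have "\<forall>\<Psi>. norm \<Psi> = 1 \<longrightarrow> gs_energy \<iota> W u \<le> Re (qform (\<iota> u + W) \<Psi>)"
    using is_min_over_gs_energy[of \<iota> u W] unfolding is_min_over_def by simp
  with assms show ?thesis
    unfolding dualmap_add_Re_trace by (rule density_ops_trace_lower_bound)
qed

lemma pure_ground_states_nonempty: "pure_ground_states \<iota> W u \<noteq> {}"
proof -
  obtain \<Psi> where "\<Psi> \<in> sphere 0 1" and "Re (qform (\<iota> u + W) \<Psi>) = gs_energy \<iota> W u"
    using is_min_over_gs_energy[of \<iota> u W] unfolding is_min_over_def by blast
  then have "proj \<Psi> \<in> pure_ground_states \<iota> W u"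
    unfolding pure_ground_states_def by auto
  then show ?thesis by blast
qed

lemma pure_ground_states_subset_pure_states: "pure_ground_states \<iota> W u \<subseteq> pure_states"
  unfolding pure_ground_states_def pure_states_def by blast

lemma energy_pure_ground_state:
  assumes "\<Gamma> \<in> pure_ground_states \<iota> W u"
  shows "dualmap \<iota> \<Gamma> u + Re (trace (\<Gamma> ** W)) = gs_energy \<iota> W u"
  using assms unfolding pure_ground_states_def dualmap_add_Re_trace by (auto simp: trace_proj_mult)

lemma vrep_subset_dualmap_pure_states: "vrep \<iota> W \<subseteq> dualmap \<iota> ` pure_states"
  unfolding vrep_def using pure_ground_states_subset_pure_states[of \<iota> W] by blast

lemma is_min_over_constrained_search:
  fixes g :: "'s \<Rightarrow> real"
  assumes lower: "\<forall>s\<in>S. E \<le> f (R s) + g s" and "s\<^sub>0 \<in> S" and "f (R s\<^sub>0) + g s\<^sub>0 = E"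
  shows "is_min_over (\<lambda>\<rho>. f \<rho> + Inf {g s | s. s \<in> S \<and> R s = \<rho>}) (R ` S) E"
proof -
  have bounds: "E - f (R s) \<le> Inf {g s' | s'. s' \<in> S \<and> R s' = R s}
      \<and> Inf {g s' | s'. s' \<in> S \<and> R s' = R s} \<le> g s" if "s \<in> S" for s
  proof
    have member: "g s \<in> {g s' | s'. s' \<in> S \<and> R s' = R s}"
      using that by blast
    have bound: "\<forall>x\<in>{g s' | s'. s' \<in> S \<and> R s' = R s}. E - f (R s) \<le> x"
    proof clarify
      fix s'
      assume "s' \<in> S" and "R s' = R s"
      then show "E - f (R s) \<le> g s'"
        using lower by fastforce
    qed
    show "E - f (R s) \<le> Inf {g s' | s'. s' \<in> S \<and> R s' = R s}"
      using member bound by (intro cInf_greatest) auto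
    show "Inf {g s' | s'. s' \<in> S \<and> R s' = R s} \<le> g s"
      using member bound by (intro cInf_lower bdd_belowI) auto
  qed
  show ?thesis
    unfolding is_min_over_def
  proof
    show "\<exists>\<rho>\<in>R ` S. f \<rho> + Inf {g s | s. s \<in> S \<and> R s = \<rho>} = E"
      using bounds[of s\<^sub>0] assms(2,3) by (intro bexI[of _ "R s\<^sub>0"]) auto
    show "\<forall>\<rho>\<in>R ` S. E \<le> f \<rho> + Inf {g s | s. s \<in> S \<and> R s = \<rho>}"
      using bounds by force
  qed
qed

lemma is_min_over_gs_energy_constrained_search:
  assumes "S \<subseteq> density_ops" and "\<Gamma>\<^sub>0 \<in> S" and "\<Gamma>\<^sub>0 \<in> pure_ground_states \<iota> W v"
  shows "is_min_over (\<lambda>\<rho>. \<rho> v + Inf {Re (trace (\<Gamma> ** W)) | \<Gamma>. \<Gamma> \<in> S \<and> dualmap \<iota> \<Gamma> = \<rho>})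
           (dualmap \<iota> ` S) (gs_energy \<iota> W v)"
proof (rule is_min_over_constrained_search)
  show "\<forall>\<Gamma>\<in>S. gs_energy \<iota> W v \<le> dualmap \<iota> \<Gamma> v + Re (trace (\<Gamma> ** W))"
    using assms(1) gs_energy_le_density_ops[of _ \<iota> W v] by blast
qed (fact assms(2), rule energy_pure_ground_state[OF assms(3)])

lemma F_p_pure_ground_state:
  assumes "\<Gamma> \<in> pure_ground_states \<iota> W u"
  shows "F_p \<iota> W (dualmap \<iota> \<Gamma>) = Re (trace (\<Gamma> ** W))"
  unfolding F_p_def
proof (rule cInf_eq_minimum)
  show "Re (trace (\<Gamma> ** W)) \<in> {Re (trace (\<Gamma>' ** W)) | \<Gamma>'. \<Gamma>' \<in> pure_states \<and> dualmap \<iota> \<Gamma>' = dualmap \<iota> \<Gamma>}"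
    using assms pure_ground_states_subset_pure_states[of \<iota> W u] by blast
  fix x
  assume "x \<in> {Re (trace (\<Gamma>' ** W)) | \<Gamma>'. \<Gamma>' \<in> pure_states \<and> dualmap \<iota> \<Gamma>' = dualmap \<iota> \<Gamma>}"
  then obtain \<Gamma>' where "\<Gamma>' \<in> density_ops" "dualmap \<iota> \<Gamma>' = dualmap \<iota> \<Gamma>" "x = Re (trace (\<Gamma>' ** W))"
    using pure_states_subset_density_ops by blast
  then show "Re (trace (\<Gamma> ** W)) \<le> x"
    using gs_energy_le_density_ops[of \<Gamma>' \<iota> W u] energy_pure_ground_state[OF assms] by simp
qed

lemma F_HK_eq_F_p:
  assumes "\<rho> \<in> vrep \<iota> W"
  shows "F_HK \<iota> W \<rho> = F_p \<iota> W \<rho>"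
proof -
  define \<Gamma> where "\<Gamma> = (SOME \<Gamma>. \<exists>u. \<Gamma> \<in> pure_ground_states \<iota> W u \<and> dualmap \<iota> \<Gamma> = \<rho>)"
  have "\<exists>u. \<Gamma> \<in> pure_ground_states \<iota> W u \<and> dualmap \<iota> \<Gamma> = \<rho>"
    unfolding \<Gamma>_def by (rule someI_ex) (use assms in \<open>auto simp: vrep_def\<close>)
  then show ?thesis
    unfolding F_HK_def \<Gamma>_def[symmetric] using F_p_pure_ground_state by metis
qed

lemma is_min_over_restrict:
  assumes "is_min_over f S m" and "T \<subseteq> S" and "x \<in> T" and "f x = m" and "\<forall>y\<in>T. g y = f y"
  shows "is_min_over g T m"
  using assms unfolding is_min_over_def by auto

theorem theorem2p29:
  fixes \<iota> :: "'v::real_vector \<Rightarrow> complex^'n^'n" and W :: "complex^'n^'n" and v :: 'v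
  assumes "gft \<iota> W"
  shows "is_min_over (\<lambda>\<rho>. \<rho> v + F_HK \<iota> W \<rho>) (vrep \<iota> W) (gs_energy \<iota> W v)
       \<and> is_min_over (\<lambda>\<rho>. \<rho> v + F_p \<iota> W \<rho>) (dualmap \<iota> ` pure_states) (gs_energy \<iota> W v)
       \<and> is_min_over (\<lambda>\<rho>. \<rho> v + F_e \<iota> W \<rho>) (dualmap \<iota> ` density_ops) (gs_energy \<iota> W v)"
proof -
  obtain \<Gamma>\<^sub>0 where ground: "\<Gamma>\<^sub>0 \<in> pure_ground_states \<iota> W v"
    using pure_ground_states_nonempty[of \<iota> W v] by blast
  then have pure: "\<Gamma>\<^sub>0 \<in> pure_states"
    using pure_ground_states_subset_pure_states[of \<iota> W v] by blast
  have ensemble: "is_min_over (\<lambda>\<rho>. \<rho> v + F_e \<iota> W \<rho>) (dualmap \<iota> ` density_ops) (gs_energy \<iota> W v)"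
    unfolding F_e_def using pure pure_states_subset_density_ops
    by (intro is_min_over_gs_energy_constrained_search[OF order_refl _ ground]) blast
  have pure_min: "is_min_over (\<lambda>\<rho>. \<rho> v + F_p \<iota> W \<rho>) (dualmap \<iota> ` pure_states) (gs_energy \<iota> W v)"
    unfolding F_p_def
    by (rule is_min_over_gs_energy_constrained_search[OF pure_states_subset_density_ops pure ground])
  have "is_min_over (\<lambda>\<rho>. \<rho> v + F_HK \<iota> W \<rho>) (vrep \<iota> W) (gs_energy \<iota> W v)"
  proof (rule is_min_over_restrict[OF pure_min vrep_subset_dualmap_pure_states])
    show "dualmap \<iota> \<Gamma>\<^sub>0 \<in> vrep \<iota> W"
      using ground unfolding vrep_def by blast
    show "dualmap \<iota> \<Gamma>\<^sub>0 v + F_p \<iota> W (dualmap \<iota> \<Gamma>\<^sub>0) = gs_energy \<iota> W v"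
      using energy_pure_ground_state[OF ground] F_p_pure_ground_state[OF ground] by simp
    show "\<forall>\<rho>\<in>vrep \<iota> W. \<rho> v + F_HK \<iota> W \<rho> = \<rho> v + F_p \<iota> W \<rho>"
      using F_HK_eq_F_p[of _ \<iota> W] by simp
  qed
  with pure_min ensemble show ?thesis by blast
qed

end
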